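(* Let $\mu$ be a non-uniform Bernoulli measure on $\Sigma=\{1,\dots,K\}^{\mathbb N}$ and let $g:\mathbb N\to[1,\infty)$ be a function with $\limsup_{n\to\infty}\frac{g(n)}{\sqrt{\log\log n}}\le1$ and $\lim_{n\to\infty}g(n)=\infty$. Then there exists a sequence of positive integers $(n_k)_{k\ge1}$ such that $$\mu\left(\left\{\mathbf i\in\Sigma:\limsup_{k\to\infty}\frac{\log\mu([\mathbf i|_1^{n_k}])+h_\mu n_k}{\sqrt{2\rho_\mu n_k}\,g(n_k)}\le\frac12\right\}\right)=1.$$
   Context: Let $K\ge2$ and $\Sigma=\{1,\dots,K\}^{\mathbb N}$. For $\mathbf i\in\Sigma$, $[\mathbf i|_1^n]$ denotes the cylinder of sequences whose first $n$ terms are $i_1,\dots,i_n$. For a probability vector $(p_i)_{i=1}^K$, the Bernoulli measure $\mu$ assigns $[i_1\dots i_n]$ measure $p_{i_1}\cdots p_{i_n}$; it is non-uniform if $p_i\ne1/K$ for some $i$. Entropy $h_\mu=-\sum_ip_i\log p_i$, variance $\rho_\mu=\sum_ip_i(\log p_i)^2-(\sum_ip_i\log p_i)^2$. Convention: $\log x=0$ for $x\le1$. *)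

theory Defs
  imports "HOL-Probability.Probability"
begin

definition Log :: "real \<Rightarrow> real" where
  "Log x = (if x \<le> 1 then 0 else ln x)"

text \<open>Full shift on {1..K} (sequences indexed by nat, position 0 = first term)
  with the Bernoulli measure of the probability vector p.\<close>
definition bernoulli_measure :: "nat \<Rightarrow> (nat \<Rightarrow> real) \<Rightarrow> (nat \<Rightarrow> nat) measure" where
  "bernoulli_measure K p =
     PiM UNIV (\<lambda>_. density (count_space {1..K}) (\<lambda>i. ennreal (p i)))"

definition cylinder :: "nat \<Rightarrow> nat \<Rightarrow> (nat \<Rightarrow> nat) \<Rightarrow> (nat \<Rightarrow> nat) set" where
  "cylinder K n i = {x \<in> space (PiM UNIV (\<lambda>_::nat. count_space {1..K})). \<forall>j<n. x j = i j}"

definition entropy_vec :: "nat \<Rightarrow> (nat \<Rightarrow> real) \<Rightarrow> real" where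
  "entropy_vec K p = - (\<Sum>i\<in>{1..K}. p i * ln (p i))"

definition variance_vec :: "nat \<Rightarrow> (nat \<Rightarrow> real) \<Rightarrow> real" where
  "variance_vec K p = (\<Sum>i\<in>{1..K}. p i * (ln (p i))\<^sup>2) - (\<Sum>i\<in>{1..K}. p i * ln (p i))\<^sup>2"

end

theory Submission
  imports Defs
begin

(* Almost surely every letter has positive probability, so ln mu[x|n] + n h is the centred sum
   of the i.i.d. variables ln p(x_j), which are bounded by some B.  Hoeffding's inequality bounds
   the probability that this sum exceeds half of sqrt(2 rho n) g(n) by exp(-rho g(n)^2 / (4 B^2)).
   As g tends to infinity, we can choose n_k with g(n_k)^2 >= 4 B^2 k / rho, which makes these
   probabilities summable, and Borel-Cantelli shows that almost surely the normalised quantity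
   is eventually below 1/2. *)

lemma weighted_variance_nonneg:
  fixes w a :: "'a \<Rightarrow> real"
  assumes w_nonneg: "\<forall>i\<in>A. w i \<ge> 0" and w_sum: "(\<Sum>i\<in>A. w i) = 1"
  shows "(\<Sum>i\<in>A. w i * (a i)\<^sup>2) - (\<Sum>i\<in>A. w i * a i)\<^sup>2 \<ge> 0"
proof -
  define m where "m = (\<Sum>i\<in>A. w i * a i)"
  have "(\<Sum>i\<in>A. w i * (a i - m)\<^sup>2) = (\<Sum>i\<in>A. w i * (a i)\<^sup>2 - 2 * m * (w i * a i) + m\<^sup>2 * w i)"
    by (rule sum.cong) (simp_all add: power2_diff algebra_simps)
  also have "\<dots> = (\<Sum>i\<in>A. w i * (a i)\<^sup>2) - 2 * m * m + m\<^sup>2 * (\<Sum>i\<in>A. w i)"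
    by (simp add: sum.distrib sum_subtractf sum_distrib_left m_def)
  also have "\<dots> = (\<Sum>i\<in>A. w i * (a i)\<^sup>2) - m\<^sup>2"
    by (simp add: w_sum power2_eq_square)
  finally have "(\<Sum>i\<in>A. w i * (a i)\<^sup>2) - m\<^sup>2 = (\<Sum>i\<in>A. w i * (a i - m)\<^sup>2)" ..
  also have "\<dots> \<ge> 0"
    using w_nonneg by (auto intro: sum_nonneg)
  finally show ?thesis unfolding m_def .
qed

lemma obtain_positive_indices_above:
  fixes g :: "nat \<Rightarrow> real"
  assumes "filterlim g at_top sequentially"
  obtains nk :: "nat \<Rightarrow> nat" where "\<forall>k. nk k > 0" and "\<forall>k. f k \<le> g (nk k)"
proof -
  have "\<exists>n>0. f k \<le> g n" for k
  proof -
    obtain N where "\<forall>n\<ge>N. f k \<le> g n"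
      using assms by (auto simp: filterlim_at_top eventually_sequentially)
    then show ?thesis by (intro exI[of _ "Suc N"]) auto
  qed
  then show ?thesis using that by metis
qed

lemma summable_exp_minus_real: "summable (\<lambda>k::nat. exp (- real k))"
proof -
  have "exp (- real k) = exp (- 1) ^ k" for k
    by (simp add: exp_of_nat_mult[symmetric])
  then show ?thesis
    using summable_geometric[of "exp (- 1)"] by simp
qed

locale bernoulli_shift =
  fixes K :: nat and p :: "nat \<Rightarrow> real"
  assumes p_nonneg: "\<forall>i\<in>{1..K}. p i \<ge> 0"
    and p_sum: "(\<Sum>i\<in>{1..K}. p i) = 1"
begin

definition letter_measure :: "nat measure" where
  "letter_measure = density (count_space {1..K}) (\<lambda>i. ennreal (p i))"

lemma sets_letter_measure [simp, measurable_cong]: "sets letter_measure = sets (count_space {1..K})"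
  by (simp add: letter_measure_def)

lemma space_letter_measure [simp]: "space letter_measure = {1..K}"
  by (simp add: letter_measure_def)

lemma emeasure_letter_measure_singleton:
  assumes "i \<in> {1..K}"
  shows "emeasure letter_measure {i} = ennreal (p i)"
  using assms unfolding letter_measure_def
  by (subst emeasure_density) (auto simp: nn_integral_count_space_finite indicator_def if_distrib cong: if_cong)

lemma prob_space_letter_measure: "prob_space letter_measure"
proof
  have "emeasure letter_measure {1..K} = (\<Sum>i\<in>{1..K}. ennreal (p i))"
    unfolding letter_measure_def by (subst emeasure_density) (auto simp: nn_integral_count_space_finite)
  also have "\<dots> = ennreal (\<Sum>i\<in>{1..K}. p i)"
    using p_nonneg by (subst sum_ennreal) auto
  finally show "emeasure letter_measure (space letter_measure) = 1"
    using p_sum by simp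
qed

lemma bernoulli_measure_eq_PiM: "bernoulli_measure K p = PiM UNIV (\<lambda>_. letter_measure)"
  by (simp add: bernoulli_measure_def letter_measure_def)

sublocale product_prob_space "\<lambda>_::nat. letter_measure" UNIV
  by (simp add: product_prob_space_def product_prob_space_axioms_def product_sigma_finite_def
      prob_space_letter_measure prob_space_imp_sigma_finite)

sublocale prob_space "bernoulli_measure K p"
  unfolding bernoulli_measure_eq_PiM by (rule P.prob_space_axioms)

lemma space_bernoulli_measure: "space (bernoulli_measure K p) = (UNIV \<rightarrow>\<^sub>E {1..K})"
  by (simp add: bernoulli_measure_eq_PiM space_PiM)

lemma measurable_letter [measurable]: "(\<lambda>x. x j) \<in> measurable (bernoulli_measure K p) letter_measure"
  unfolding bernoulli_measure_eq_PiM by (rule measurable_component_singleton) simp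

lemma borel_measurable_letter_measure [measurable]: "f \<in> borel_measurable letter_measure"
  by (simp add: measurable_cong_sets[OF sets_letter_measure refl])

lemma measure_cylinder:
  assumes x: "x \<in> space (bernoulli_measure K p)"
  shows "measure (bernoulli_measure K p) (cylinder K n x) = (\<Prod>j<n. p (x j))"
proof -
  have letters: "x j \<in> {1..K}" for j
    using x by (auto simp: space_bernoulli_measure)
  have "cylinder K n x = {y \<in> space (PiM UNIV (\<lambda>_. letter_measure)). \<forall>j\<in>{..<n}. y j \<in> {x j}}"
    by (auto simp: cylinder_def space_PiM)
  also have "emeasure (PiM UNIV (\<lambda>_. letter_measure)) \<dots> = (\<Prod>j<n. emeasure letter_measure {x j})"
    by (rule emeasure_PiM_Collect) (use letters in auto)
  finally have "emeasure (bernoulli_measure K p) (cylinder K n x) = (\<Prod>j<n. emeasure letter_measure {x j})"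
    by (simp only: bernoulli_measure_eq_PiM)
  also have "\<dots> = ennreal (\<Prod>j<n. p (x j))"
    using letters p_nonneg by (simp add: emeasure_letter_measure_singleton prod_ennreal)
  finally show ?thesis
    using letters p_nonneg by (simp add: emeasure_eq_measure prod_nonneg)
qed

lemma borel_measurable_measure_cylinder [measurable]:
  "(\<lambda>x. measure (bernoulli_measure K p) (cylinder K n x)) \<in> borel_measurable (bernoulli_measure K p)"
  by (subst measurable_cong[OF measure_cylinder]) simp_all

lemma AE_letters_pos: "AE x in bernoulli_measure K p. \<forall>j. p (x j) > 0"
proof -
  have "AE y in letter_measure. p y > 0"
    unfolding letter_measure_def by (subst AE_density) (auto simp: AE_count_space)
  then have "AE x in bernoulli_measure K p. p (x j) > 0" for j
    unfolding bernoulli_measure_eq_PiM by (rule AE_component[of j "\<lambda>y. p y > 0", OF UNIV_I])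
  then show ?thesis
    by (simp add: AE_all_countable)
qed

lemma ln_measure_cylinder:
  assumes "x \<in> space (bernoulli_measure K p)" and "\<forall>j. p (x j) > 0"
  shows "ln (measure (bernoulli_measure K p) (cylinder K n x)) = (\<Sum>j<n. ln (p (x j)))"
proof -
  have "p (x j) \<noteq> 0" for j
    using assms(2) by (metis less_irrefl)
  then have "ln (\<Prod>j<n. p (x j)) = (\<Sum>j<n. ln (p (x j)))"
    by (simp add: ln_prod)
  then show ?thesis
    using assms(1) by (simp add: measure_cylinder)
qed

lemma indep_vars_letters: "indep_vars (\<lambda>_. letter_measure) (\<lambda>j x. x j) UNIV"
proof -
  have "distr (bernoulli_measure K p) (PiM UNIV (\<lambda>_. letter_measure)) (\<lambda>x. \<lambda>j\<in>UNIV. x j)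
      = PiM UNIV (\<lambda>j. distr (bernoulli_measure K p) letter_measure (\<lambda>x. x j))"
    unfolding bernoulli_measure_eq_PiM using PiM_component by (simp add: restrict_def)
  then show ?thesis
    by (subst indep_vars_iff_distr_eq_PiM) auto
qed

lemma expectation_ln_letter: "expectation (\<lambda>x. ln (p (x j))) = - entropy_vec K p"
proof -
  have "expectation (\<lambda>x. ln (p (x j)))
      = integral\<^sup>L (distr (bernoulli_measure K p) letter_measure (\<lambda>x. x j)) (\<lambda>i. ln (p i))"
    by (subst integral_distr) auto
  also have "\<dots> = integral\<^sup>L letter_measure (\<lambda>i. ln (p i))"
    unfolding bernoulli_measure_eq_PiM using PiM_component by simp
  also have "\<dots> = (\<Sum>i\<in>{1..K}. p i * ln (p i))"
    unfolding letter_measure_def using p_nonneg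
    by (subst integral_density) (auto simp: lebesgue_integral_count_space_finite)
  finally show ?thesis
    by (simp add: entropy_vec_def)
qed

lemma obtain_abs_ln_bound:
  obtains B :: real where "B > 0" and "\<forall>i\<in>{1..K}. \<bar>ln (p i)\<bar> \<le> B"
proof
  show "(\<Sum>i\<in>{1..K}. \<bar>ln (p i)\<bar>) + 1 > 0"
    by (simp add: add_nonneg_pos sum_nonneg)
  show "\<forall>i\<in>{1..K}. \<bar>ln (p i)\<bar> \<le> (\<Sum>i\<in>{1..K}. \<bar>ln (p i)\<bar>) + 1"
  proof
    fix i :: nat assume "i \<in> {1..K}"
    then have "\<bar>ln (p i)\<bar> \<le> (\<Sum>i\<in>{1..K}. \<bar>ln (p i)\<bar>)"
      by (intro member_le_sum) auto
    then show "\<bar>ln (p i)\<bar> \<le> (\<Sum>i\<in>{1..K}. \<bar>ln (p i)\<bar>) + 1"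
      by simp
  qed
qed

lemma information_upper_tail:
  assumes n: "n > 0" and \<epsilon>: "\<epsilon> \<ge> 0" and B: "B > 0"
    and ln_bound: "\<forall>i\<in>{1..K}. \<bar>ln (p i)\<bar> \<le> B"
  shows "prob {x \<in> space (bernoulli_measure K p). (\<Sum>j<n. ln (p (x j))) + entropy_vec K p * n \<ge> \<epsilon>}
           \<le> exp (- \<epsilon>\<^sup>2 / (2 * n * B\<^sup>2))"
proof -
  interpret Hoeffding_ineq "bernoulli_measure K p" "{..<n}" "\<lambda>j x. ln (p (x j))" "\<lambda>_. - B" "\<lambda>_. B"
    "\<Sum>j<n. expectation (\<lambda>x. ln (p (x j)))"
  proof unfold_locales
    have "indep_vars (\<lambda>_. borel) (\<lambda>j. (\<lambda>i. ln (p i)) \<circ> (\<lambda>x. x j)) UNIV"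
      by (rule indep_vars_compose[OF indep_vars_letters]) simp
    then have "indep_vars (\<lambda>_. borel) (\<lambda>j x. ln (p (x j))) UNIV"
      by (simp add: o_def)
    then show "indep_vars (\<lambda>_. borel) (\<lambda>j x. ln (p (x j))) {..<n}"
      by (rule indep_vars_subset) simp
    show "AE x in bernoulli_measure K p. ln (p (x j)) \<in> {- B..B}" for j
    proof (rule AE_I2)
      fix x assume "x \<in> space (bernoulli_measure K p)"
      then have "x j \<in> {1..K}"
        by (auto simp: space_bernoulli_measure)
      then have "\<bar>ln (p (x j))\<bar> \<le> B"
        using ln_bound by blast
      then show "ln (p (x j)) \<in> {- B..B}"
        by (auto simp: abs_le_iff)
    qed
  qed simp_all
  have "(\<Sum>j<n. (B - - B)\<^sup>2) = 4 * n * B\<^sup>2"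
    by (simp add: power2_eq_square)
  moreover have "(\<Sum>j<n. expectation (\<lambda>x. ln (p (x j)))) = - entropy_vec K p * n"
    by (simp add: expectation_ln_letter)
  ultimately show ?thesis
    using Hoeffding_ineq_ge[OF \<epsilon>] n B by (simp add: algebra_simps)
qed

lemma variance_vec_nonneg: "variance_vec K p \<ge> 0"
  using weighted_variance_nonneg[OF p_nonneg p_sum, of "\<lambda>i. ln (p i)"]
  by (simp add: variance_vec_def)

definition normalized_information :: "(nat \<Rightarrow> real) \<Rightarrow> nat \<Rightarrow> (nat \<Rightarrow> nat) \<Rightarrow> real" where
  "normalized_information g n x =
     (ln (measure (bernoulli_measure K p) (cylinder K n x)) + entropy_vec K p * real n)
       / (sqrt (2 * variance_vec K p * real n) * g n)"

lemma borel_measurable_normalized_information [measurable]: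
  "normalized_information g n \<in> borel_measurable (bernoulli_measure K p)"
  unfolding normalized_information_def
  by (intro borel_measurable_divide borel_measurable_add borel_measurable_ln
      borel_measurable_measure_cylinder borel_measurable_const)

lemma normalized_information_lt_half:
  assumes "x \<in> space (bernoulli_measure K p)" and "\<forall>j. p (x j) > 0"
    and "variance_vec K p > 0" and "n > 0" and "g n > 0"
    and "(\<Sum>j<n. ln (p (x j))) + entropy_vec K p * n < sqrt (2 * variance_vec K p * n) * g n / 2"
  shows "normalized_information g n x < 1 / 2"
proof -
  have "sqrt (2 * variance_vec K p * n) * g n > 0"
    using assms(3-5) by simp
  then show ?thesis
    using assms by (simp add: normalized_information_def ln_measure_cylinder divide_less_eq)
qed

lemma AE_eventually_information_below:
  assumes nk_pos: "\<forall>k. nk k > 0" and \<epsilon>_nonneg: "\<forall>k. \<epsilon> k \<ge> 0"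
    and B: "B > 0" and ln_bound: "\<forall>i\<in>{1..K}. \<bar>ln (p i)\<bar> \<le> B"
    and summable: "summable (\<lambda>k. exp (- (\<epsilon> k)\<^sup>2 / (2 * real (nk k) * B\<^sup>2)))"
  shows "AE x in bernoulli_measure K p.
           eventually (\<lambda>k. (\<Sum>j<nk k. ln (p (x j))) + entropy_vec K p * nk k < \<epsilon> k) sequentially"
proof -
  define A where "A k = {x \<in> space (bernoulli_measure K p).
                           (\<Sum>j<nk k. ln (p (x j))) + entropy_vec K p * nk k \<ge> \<epsilon> k}" for k
  have A_sets [measurable]: "A k \<in> sets (bernoulli_measure K p)" for k
    unfolding A_def by measurable
  have tail: "prob (A k) \<le> exp (- (\<epsilon> k)\<^sup>2 / (2 * real (nk k) * B\<^sup>2))" for k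
    unfolding A_def using nk_pos \<epsilon>_nonneg by (intro information_upper_tail B ln_bound) auto
  have "summable (\<lambda>k. prob (A k))"
    by (rule summable_comparison_test'[OF summable, of 0]) (use tail in simp)
  then have "AE x in bernoulli_measure K p. eventually (\<lambda>k. x \<in> space (bernoulli_measure K p) - A k) sequentially"
    by (intro borel_cantelli_AE1) (simp_all add: emeasure_eq_measure)
  then show ?thesis
    by (rule eventually_mono) (auto simp: A_def elim!: eventually_mono)
qed

lemma AE_eventually_normalized_information_lt_half:
  assumes \<rho>: "variance_vec K p > 0" and g_pos: "\<forall>n. g n > 0" and nk_pos: "\<forall>k. nk k > 0"
    and B: "B > 0" and ln_bound: "\<forall>i\<in>{1..K}. \<bar>ln (p i)\<bar> \<le> B"
    and nk_large: "\<forall>k. 2 * B * sqrt (real k / variance_vec K p) \<le> g (nk k)"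
  shows "AE x in bernoulli_measure K p. eventually (\<lambda>k. normalized_information g (nk k) x < 1 / 2) sequentially"
proof -
  define \<epsilon> where "\<epsilon> k = sqrt (2 * variance_vec K p * real (nk k)) * g (nk k) / 2" for k
  have tail_le: "exp (- (\<epsilon> k)\<^sup>2 / (2 * real (nk k) * B\<^sup>2)) \<le> exp (- real k)" for k
  proof -
    have "(2 * B * sqrt (real k / variance_vec K p))\<^sup>2 \<le> (g (nk k))\<^sup>2"
      using nk_large B \<rho> by (intro power_mono) auto
    then have "real k \<le> variance_vec K p * (g (nk k))\<^sup>2 / (4 * B\<^sup>2)"
      using \<rho> B by (simp add: power_mult_distrib field_simps)
    also have "\<dots> = (\<epsilon> k)\<^sup>2 / (2 * real (nk k) * B\<^sup>2)"
      using \<rho> nk_pos[rule_format, of k] B by (simp add: \<epsilon>_def power_mult_distrib power_divide field_simps)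
    finally show ?thesis
      by simp
  qed
  have "summable (\<lambda>k. exp (- (\<epsilon> k)\<^sup>2 / (2 * real (nk k) * B\<^sup>2)))"
    by (rule summable_comparison_test'[OF summable_exp_minus_real, of 0]) (use tail_le in simp)
  then have "AE x in bernoulli_measure K p.
      eventually (\<lambda>k. (\<Sum>j<nk k. ln (p (x j))) + entropy_vec K p * nk k < \<epsilon> k) sequentially"
    using nk_pos g_pos \<rho> B ln_bound
    by (intro AE_eventually_information_below) (auto simp: \<epsilon>_def less_imp_le)
  then show ?thesis
    using AE_letters_pos AE_space
  proof eventually_elim
    case (elim x)
    from elim(1) show ?case
    proof eventually_elim
      case (elim k)
      then show ?case
        using \<rho> nk_pos g_pos \<open>x \<in> space (bernoulli_measure K p)\<close> \<open>\<forall>j. p (x j) > 0\<close>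
        by (intro normalized_information_lt_half) (simp_all add: \<epsilon>_def)
    qed
  qed
qed

lemma AE_limsup_normalized_information_le_half:
  fixes g :: "nat \<Rightarrow> real"
  assumes g_pos: "\<forall>n. g n > 0" and g_lim: "filterlim g at_top sequentially"
  obtains nk :: "nat \<Rightarrow> nat" where "\<forall>k. nk k > 0"
    and "AE x in bernoulli_measure K p. limsup (\<lambda>k. ereal (normalized_information g (nk k) x)) \<le> 1 / 2"
proof (cases "variance_vec K p = 0")
  case True
  \<comment> \<open>Possible for non-uniform p with zero entries; then the quotient is 0 since x / 0 = 0.\<close>
  then have "normalized_information g n x = 0" for n x
    by (simp add: normalized_information_def)
  then show ?thesis
    by (intro that[of "\<lambda>_. 1"] AE_I2) (simp_all add: Limsup_const zero_ereal_def[symmetric])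
next
  case False
  with variance_vec_nonneg have \<rho>: "variance_vec K p > 0"
    by simp
  obtain B where B: "B > 0" and ln_bound: "\<forall>i\<in>{1..K}. \<bar>ln (p i)\<bar> \<le> B"
    by (rule obtain_abs_ln_bound)
  obtain nk where nk_pos: "\<forall>k. nk k > 0"
    and nk_large: "\<forall>k. 2 * B * sqrt (real k / variance_vec K p) \<le> g (nk k)"
    by (rule obtain_positive_indices_above[OF g_lim])
  have half: "(1 :: ereal) / 2 = ereal (1 / 2)"
    by (simp add: one_ereal_def ereal_divide)
  have "AE x in bernoulli_measure K p. limsup (\<lambda>k. ereal (normalized_information g (nk k) x)) \<le> 1 / 2"
    using AE_eventually_normalized_information_lt_half[OF \<rho> g_pos nk_pos B ln_bound nk_large]
  proof (rule eventually_mono)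
    fix x
    assume "eventually (\<lambda>k. normalized_information g (nk k) x < 1 / 2) sequentially"
    then have "eventually (\<lambda>k. ereal (normalized_information g (nk k) x) \<le> ereal (1 / 2)) sequentially"
      by (auto elim: eventually_mono)
    then show "limsup (\<lambda>k. ereal (normalized_information g (nk k) x)) \<le> 1 / 2"
      unfolding half by (rule Limsup_bounded)
  qed
  with nk_pos show ?thesis
    by (rule that)
qed

end

theorem lemma6p1:
  fixes K :: nat and p :: "nat \<Rightarrow> real" and g :: "nat \<Rightarrow> real"
  assumes K2: "K \<ge> 2"
    and p_nonneg: "\<forall>i\<in>{1..K}. p i \<ge> 0"
    and p_sum: "(\<Sum>i\<in>{1..K}. p i) = 1"
    and nonuniform: "\<exists>i\<in>{1..K}. p i \<noteq> 1 / real K"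
    and g_ge1: "\<forall>n. g n \<ge> 1"
    and g_limsup: "limsup (\<lambda>n. ereal (g n / sqrt (Log (Log (real n))))) \<le> 1"
    and g_lim: "filterlim g at_top sequentially"
  shows "\<exists>nk :: nat \<Rightarrow> nat. (\<forall>k. nk k > 0) \<and>
    measure (bernoulli_measure K p)
      {x \<in> space (bernoulli_measure K p).
         limsup (\<lambda>k. ereal ((ln (measure (bernoulli_measure K p) (cylinder K (nk k) x))
                               + entropy_vec K p * real (nk k))
                  / (sqrt (2 * variance_vec K p * real (nk k)) * g (nk k)))) \<le> 1 / 2} = 1"
proof -
  interpret bernoulli_shift K p
    by (rule bernoulli_shift.intro[OF p_nonneg p_sum])
  have g_pos: "\<forall>n. g n > 0"
    using g_ge1 by (meson less_le_trans zero_less_one)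
  obtain nk where nk_pos: "\<forall>k. nk k > 0" and AE_le_half:
    "AE x in bernoulli_measure K p. limsup (\<lambda>k. ereal (normalized_information g (nk k) x)) \<le> 1 / 2"
    using AE_limsup_normalized_information_le_half[OF g_pos g_lim] by blast
  have "{x \<in> space (bernoulli_measure K p).
          limsup (\<lambda>k. ereal (normalized_information g (nk k) x)) \<le> 1 / 2} \<in> sets (bernoulli_measure K p)"
    by measurable
  with AE_le_half have "prob {x \<in> space (bernoulli_measure K p).
          limsup (\<lambda>k. ereal (normalized_information g (nk k) x)) \<le> 1 / 2} = 1"
    by (simp add: prob_Collect_eq_1)
  with nk_pos show ?thesis
    unfolding normalized_information_def by blast
qed

end
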